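(* (Truth lemma) For every state $(\Delta,\pi,i)$ of the canonical model $\mathcal{M}^{Can}$ and every $\alpha\in\mathcal{L}_T$: $\mathcal{M}^{Can},(\Delta,\pi,i)\models\alpha$ if and only if $\alpha\in\Delta$.
   Context: $\mathcal{L}_T$: $\alpha::=\varphi\mid\varphi\rightsquigarrow\varphi\mid B(\alpha)\mid\alpha*\alpha\mid\neg\alpha$, with $\varphi$ ranging over classical propositional formulas (set $\mathcal{L}_{CL}$, built from variables, $\bot$ and classical connectives) and $*\in\{\land,\lor,\to,\leftrightarrow\}$. SBTrust is the Hilbert system ($\varphi,\psi,\chi,\varphi_i,\psi_i$ propositional; $\alpha,\beta\in\mathcal{L}_T$; rule outputs in $\mathcal{L}_T$): classical tautologies and Modus Ponens; $\varphi\rightsquigarrow\varphi$; $(\varphi\rightsquigarrow\bot)\to\neg\varphi$; $((\psi\land\chi)\rightsquigarrow\varphi)\to(\psi\rightsquigarrow(\chi\to\varphi))$; $(\neg(\varphi\leftrightarrow\psi)\rightsquigarrow\bot)\to((\varphi\rightsquigarrow\chi)\leftrightarrow(\psi\rightsquigarrow\chi))$; rule RCK: from $(\varphi_1\land\dots\land\varphi_n)\to\varphi_{n+1}$ infer $\bigwedge_{j\le n}(\psi\rightsquigarrow\varphi_j)\to(\psi\rightsquigarrow\varphi_{n+1})$; rule $\mathbf{S5_F}$: from $(\ell_1\land\dots\land\ell_n)\to\chi$ infer $(\ell_1\land\dots\land\ell_n)\to(\neg\chi\rightsquigarrow\bot)$, each $\ell_j$ being $\varphi_j\rightsquigarrow\psi_j$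 or its negation, $\chi$ propositional; $B(\alpha\to\beta)\to(B\alpha\to B\beta)$; $B\alpha\to\neg B\neg\alpha$; $B\alpha\to BB\alpha$; necessitation for $B$. MCS: $\Gamma\subseteq\mathcal{L}_T$ with $\Gamma\nvdash\bot$ and, for each $\alpha$, $\alpha\in\Gamma$ or $\neg\alpha\in\Gamma$. $\Gamma\leftrightsquigarrow\Delta$ iff the MCSs contain the same formulas of the form $\chi\rightsquigarrow\psi$; $[\Gamma]_\leftrightsquigarrow$ its class. $\rightsquigarrow_\varphi(\Gamma)=\{\psi:\varphi\rightsquigarrow\psi\in\Gamma\}$; $\Delta$ is $\varphi$-likely for $\Gamma$ if $\rightsquigarrow_\varphi(\Gamma)\subseteq\Delta$. $S_\Gamma=[\Gamma]_\leftrightsquigarrow\times\mathcal{L}_{CL}\times\{0,1,2\}$; $(\Delta,\varphi,i)\succeq_\Gamma(\Omega,\psi,j)$ iff ($\Delta$ is $\varphi$-likely for $\Gamma$ and $\varphi\in\Omega$) or ($i=1,j=0$) or ($i=2,j=1$) or ($i=0,j=2$). Fix a set $I$ containing exactly one representative of each $\leftrightsquigarrow$-class. The canonical model is $\mathcal{M}^{Can}=\langle S,(S_\Gamma)_{\Gamma\in I},(\succeq_\Gamma)_{\Gamma\in I},R,V\rangle$ with $S=\bigcup_{\Gamma\in I}S_\Gamma$, $V(p)=\{(\Delta,\varphi,i)\in S:p\in\Delta\}$, and $(\Delta,\varphi,i)R(\Omega,\psi,j)$ iff for all $\alpha\in\mathcal{L}_T$, $B(\alpha)\in\Delta\Rightarrow\alpha\in\Omega$.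 Truth in such a structure: $s\models p$ iff $s\in V(p)$; Boolean clauses as usual; $s\models\varphi\rightsquigarrow\psi$ iff $\mathit{most}(\|\varphi\|_\Gamma)\subseteq\|\psi\|_\Gamma$ where $s\in S_\Gamma$, $\|\varphi\|_\Gamma=\{v\in S_\Gamma:v\models\varphi\}$ and $\mathit{most}(X)=\{x\in X:\forall y\in X\,(y\succeq_\Gamma x\Rightarrow x\succeq_\Gamma y)\}$; $s\models B(\alpha)$ iff $v\models\alpha$ for all $v$ with $sRv$. *)

theory Defs
  imports Main
begin

datatype 'v form =
    FVar 'v
  | FBot
  | FNeg "'v form"
  | FAnd "'v form" "'v form"
  | FOr  "'v form" "'v form"
  | FImp "'v form" "'v form"
  | FIff "'v form" "'v form"
  | FCond "'v form" "'v form"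
  | FBel "'v form"

fun classical :: "'v form \<Rightarrow> bool" where
  "classical (FVar p) = True"
| "classical FBot = True"
| "classical (FNeg a) = classical a"
| "classical (FAnd a b) = (classical a \<and> classical b)"
| "classical (FOr a b) = (classical a \<and> classical b)"
| "classical (FImp a b) = (classical a \<and> classical b)"
| "classical (FIff a b) = (classical a \<and> classical b)"
| "classical (FCond a b) = False"
| "classical (FBel a) = False"

fun inLT :: "'v form \<Rightarrow> bool" where
  "inLT (FVar p) = True"
| "inLT FBot = True"
| "inLT (FNeg a) = inLT a"
| "inLT (FAnd a b) = (inLT a \<and> inLT b)"
| "inLT (FOr a b) = (inLT a \<and> inLT b)"
| "inLT (FImp a b) = (inLT a \<and> inLT b)"
| "inLT (FIff a b) = (inLT a \<and> inLT b)"
| "inLT (FCond a b) = (classical a \<and> classical b)"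
| "inLT (FBel a) = inLT a"

text \<open>Boolean evaluation where variables, conditionals and belief formulas are atoms.\<close>
fun beval :: "('v form \<Rightarrow> bool) \<Rightarrow> 'v form \<Rightarrow> bool" where
  "beval f (FVar p) = f (FVar p)"
| "beval f FBot = False"
| "beval f (FNeg a) = (\<not> beval f a)"
| "beval f (FAnd a b) = (beval f a \<and> beval f b)"
| "beval f (FOr a b) = (beval f a \<or> beval f b)"
| "beval f (FImp a b) = (beval f a \<longrightarrow> beval f b)"
| "beval f (FIff a b) = (beval f a \<longleftrightarrow> beval f b)"
| "beval f (FCond a b) = f (FCond a b)"
| "beval f (FBel a) = f (FBel a)"

definition taut :: "'v form \<Rightarrow> bool" where
  "taut \<alpha> \<longleftrightarrow> inLT \<alpha> \<and> (\<forall>f. beval f \<alpha>)"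

text \<open>Finite conjunction \<open>x1 \<and> ... \<and> xn\<close> (used with nonempty lists)\<close>
fun conjs :: "'v form list \<Rightarrow> 'v form" where
  "conjs [] = FNeg FBot"
| "conjs [x] = x"
| "conjs (x # y # ys) = FAnd x (conjs (y # ys))"

definition is_literal :: "'v form \<Rightarrow> bool" where
  "is_literal l \<longleftrightarrow> (\<exists>a b. classical a \<and> classical b \<and> (l = FCond a b \<or> l = FNeg (FCond a b)))"

inductive sbthm :: "'v form \<Rightarrow> bool" where
  Taut: "taut \<alpha> \<Longrightarrow> sbthm \<alpha>"
| MP: "sbthm \<alpha> \<Longrightarrow> sbthm (FImp \<alpha> \<beta>) \<Longrightarrow> sbthm \<beta>"
| Id: "classical \<phi> \<Longrightarrow> sbthm (FCond \<phi> \<phi>)"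
| Bot: "classical \<phi> \<Longrightarrow> sbthm (FImp (FCond \<phi> FBot) (FNeg \<phi>))"
| Sh: "classical \<phi> \<Longrightarrow> classical \<psi> \<Longrightarrow> classical \<chi> \<Longrightarrow>
      sbthm (FImp (FCond (FAnd \<psi> \<chi>) \<phi>) (FCond \<psi> (FImp \<chi> \<phi>)))"
| Ext: "classical \<phi> \<Longrightarrow> classical \<psi> \<Longrightarrow> classical \<chi> \<Longrightarrow>
      sbthm (FImp (FCond (FNeg (FIff \<phi> \<psi>)) FBot) (FIff (FCond \<phi> \<chi>) (FCond \<psi> \<chi>)))"
| RCK: "\<phi>s \<noteq> [] \<Longrightarrow> (\<forall>x\<in>set \<phi>s. classical x) \<Longrightarrow> classical \<phi> \<Longrightarrow> classical \<psi> \<Longrightarrow>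
      sbthm (FImp (conjs \<phi>s) \<phi>) \<Longrightarrow>
      sbthm (FImp (conjs (map (FCond \<psi>) \<phi>s)) (FCond \<psi> \<phi>))"
| S5F: "ls \<noteq> [] \<Longrightarrow> (\<forall>l\<in>set ls. is_literal l) \<Longrightarrow> classical \<chi> \<Longrightarrow>
      sbthm (FImp (conjs ls) \<chi>) \<Longrightarrow>
      sbthm (FImp (conjs ls) (FCond (FNeg \<chi>) FBot))"
| K: "inLT \<alpha> \<Longrightarrow> inLT \<beta> \<Longrightarrow> sbthm (FImp (FBel (FImp \<alpha> \<beta>)) (FImp (FBel \<alpha>) (FBel \<beta>)))"
| D: "inLT \<alpha> \<Longrightarrow> sbthm (FImp (FBel \<alpha>) (FNeg (FBel (FNeg \<alpha>))))"
| Four: "inLT \<alpha> \<Longrightarrow> sbthm (FImp (FBel \<alpha>) (FBel (FBel \<alpha>)))"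
| Nec: "sbthm \<alpha> \<Longrightarrow> sbthm (FBel \<alpha>)"

text \<open>Derivability from a set of premises: \<open>\<Gamma> \<turnstile> \<alpha>\<close> iff \<open>\<turnstile> \<gamma>1 \<rightarrow> (\<dots> \<rightarrow> (\<gamma>n \<rightarrow> \<alpha>))\<close>
  for some \<open>\<gamma>1,\<dots>,\<gamma>n \<in> \<Gamma>\<close> (MP applied to premises; necessitation only on theorems).\<close>
definition derives :: "'v form set \<Rightarrow> 'v form \<Rightarrow> bool" where
  "derives \<Gamma> \<alpha> \<longleftrightarrow> (\<exists>xs. set xs \<subseteq> \<Gamma> \<and> sbthm (foldr FImp xs \<alpha>))"

definition MCS :: "'v form set \<Rightarrow> bool" where
  "MCS \<Gamma> \<longleftrightarrow> \<Gamma> \<subseteq> {\<alpha>. inLT \<alpha>} \<and> \<not> derives \<Gamma> FBot \<and>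
     (\<forall>\<alpha>. inLT \<alpha> \<longrightarrow> \<alpha> \<in> \<Gamma> \<or> FNeg \<alpha> \<in> \<Gamma>)"

definition most :: "('s \<Rightarrow> 's \<Rightarrow> bool) \<Rightarrow> 's set \<Rightarrow> 's set" where
  "most P X = {x \<in> X. \<forall>y\<in>X. P y x \<longrightarrow> P x y}"

text \<open>\<open>Sc \<Gamma>\<close> is the cell \<open>S_\<Gamma>\<close>, \<open>P \<Gamma> x y\<close> means \<open>x \<succeq>_\<Gamma> y\<close>; the cell of \<open>s\<close> is the unique
  \<open>\<Gamma>\<in>I\<close> with \<open>s\<in>S_\<Gamma>\<close>.\<close>
fun sat :: "'i set \<Rightarrow> ('i \<Rightarrow> 's set) \<Rightarrow> ('i \<Rightarrow> 's \<Rightarrow> 's \<Rightarrow> bool) \<Rightarrow> ('s \<Rightarrow> 's \<Rightarrow> bool)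
             \<Rightarrow> ('v \<Rightarrow> 's set) \<Rightarrow> 's \<Rightarrow> 'v form \<Rightarrow> bool" where
  "sat I Sc P R V s (FVar p) = (s \<in> V p)"
| "sat I Sc P R V s FBot = False"
| "sat I Sc P R V s (FNeg a) = (\<not> sat I Sc P R V s a)"
| "sat I Sc P R V s (FAnd a b) = (sat I Sc P R V s a \<and> sat I Sc P R V s b)"
| "sat I Sc P R V s (FOr a b) = (sat I Sc P R V s a \<or> sat I Sc P R V s b)"
| "sat I Sc P R V s (FImp a b) = (sat I Sc P R V s a \<longrightarrow> sat I Sc P R V s b)"
| "sat I Sc P R V s (FIff a b) = (sat I Sc P R V s a \<longleftrightarrow> sat I Sc P R V s b)"
| "sat I Sc P R V s (FCond a b) =
     (let \<Gamma> = (THE \<Gamma>. \<Gamma> \<in> I \<and> s \<in> Sc \<Gamma>) in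
        most (P \<Gamma>) {v \<in> Sc \<Gamma>. sat I Sc P R V v a} \<subseteq> {v \<in> Sc \<Gamma>. sat I Sc P R V v b})"
| "sat I Sc P R V s (FBel a) = (\<forall>v. R s v \<longrightarrow> sat I Sc P R V v a)"

type_synonym 'v cstate = "'v form set \<times> 'v form \<times> nat"

definition same_conds :: "'v form set \<Rightarrow> 'v form set \<Rightarrow> bool" where
  "same_conds \<Gamma> \<Delta> \<longleftrightarrow> (\<forall>a b. FCond a b \<in> \<Gamma> \<longleftrightarrow> FCond a b \<in> \<Delta>)"

definition representatives :: "'v form set set \<Rightarrow> bool" where
  "representatives I \<longleftrightarrow> (\<forall>\<Gamma>\<in>I. MCS \<Gamma>) \<and>
     (\<forall>\<Delta>. MCS \<Delta> \<longrightarrow> (\<exists>!\<Gamma>. \<Gamma> \<in> I \<and> same_conds \<Delta> \<Gamma>))"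

definition likely_set :: "'v form \<Rightarrow> 'v form set \<Rightarrow> 'v form set" where
  "likely_set \<phi> \<Gamma> = {\<psi>. FCond \<phi> \<psi> \<in> \<Gamma>}"

definition can_cell :: "'v form set \<Rightarrow> 'v cstate set" where
  "can_cell \<Gamma> = {(\<Delta>, \<phi>, i). MCS \<Delta> \<and> same_conds \<Delta> \<Gamma> \<and> classical \<phi> \<and> i \<in> {0,1,2}}"

definition can_pref :: "'v form set \<Rightarrow> 'v cstate \<Rightarrow> 'v cstate \<Rightarrow> bool" where
  "can_pref \<Gamma> x y = (case x of (\<Delta>, \<phi>, i) \<Rightarrow> case y of (\<Omega>, \<psi>, j) \<Rightarrow>
     (likely_set \<phi> \<Gamma> \<subseteq> \<Delta> \<and> \<phi> \<in> \<Omega>) \<or> (i = 1 \<and> j = 0) \<or> (i = 2 \<and> j = 1) \<or> (i = 0 \<and> j = 2))"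

definition can_S :: "'v form set set \<Rightarrow> 'v cstate set" where
  "can_S I = (\<Union>\<Gamma>\<in>I. can_cell \<Gamma>)"

definition can_V :: "'v form set set \<Rightarrow> 'v \<Rightarrow> 'v cstate set" where
  "can_V I p = {s \<in> can_S I. FVar p \<in> fst s}"

definition can_R :: "'v form set set \<Rightarrow> 'v cstate \<Rightarrow> 'v cstate \<Rightarrow> bool" where
  "can_R I s t \<longleftrightarrow> s \<in> can_S I \<and> t \<in> can_S I \<and>
     (\<forall>\<alpha>. inLT \<alpha> \<longrightarrow> FBel \<alpha> \<in> fst s \<longrightarrow> \<alpha> \<in> fst t)"

definition can_sat :: "'v form set set \<Rightarrow> 'v cstate \<Rightarrow> 'v form \<Rightarrow> bool" where
  "can_sat I s \<alpha> = sat I can_cell can_pref (can_R I) (can_V I) s \<alpha>"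

end

theory Submission
  imports Defs
begin

(* Membership in a maximal consistent set is a Boolean valuation, which settles the
   propositional cases.  For B the canonical relation is the standard one: if B \<alpha> is not in
   \<Delta>, then {\<beta>. B \<beta> \<in> \<Delta>} \<union> {\<not>\<alpha>} is consistent by K and necessitation, and a Lindenbaum
   extension of it is an accessible state refuting \<alpha>.

   Conditionals are evaluated inside the cell of an MCS \<Gamma>, i.e. among the MCSs with the same
   conditionals as \<Gamma>.  By rule S5F and the axiom (\<phi> \<leadsto> \<bottom>) \<rightarrow> \<not>\<phi>, the formula
   \<not>\<chi> \<leadsto> \<bottom> (here nec \<chi>) is an S5 necessity on the cell: it lies in \<Gamma> iff \<chi> lies in every
   MCS of the cell.  If \<phi> \<leadsto> \<psi> \<notin> \<Gamma>, RCK and this necessity yield a \<phi>-likely MCS \<Omega> of the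
   cell containing \<not>\<psi>, and (\<Omega>, \<phi>, 0) is a most preferred \<phi>-state refuting \<psi>.  Conversely,
   the cyclic third component can always be outbid, so a most preferred \<phi>-state (\<Delta>, \<chi>, i)
   owes its maximality to the likelihood clause: \<Delta> is \<chi>-likely and \<chi> holds in every
   \<phi>-member of the cell.  Hence nec (\<phi> \<leftrightarrow> \<chi> \<and> \<phi>) \<in> \<Gamma>, and Ext with the shift axiom turns
   \<phi> \<leadsto> \<psi> into \<chi> \<leadsto> (\<phi> \<rightarrow> \<psi>) \<in> \<Gamma>, so \<psi> \<in> \<Delta>. *)

lemma classical_imp_inLT: "classical a \<Longrightarrow> inLT a"
  by (induction a) auto

lemma is_literal_imp_inLT: "is_literal l \<Longrightarrow> inLT l"
  unfolding is_literal_def by auto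

lemma inLT_conjs: "inLT (conjs xs) \<longleftrightarrow> (\<forall>x\<in>set xs. inLT x)"
  by (induction xs rule: conjs.induct) auto

lemma beval_conjs: "beval f (conjs xs) \<longleftrightarrow> (\<forall>x\<in>set xs. beval f x)"
  by (induction xs rule: conjs.induct) auto

lemma inLT_foldr_FImp: "inLT (foldr FImp xs b) \<longleftrightarrow> (\<forall>x\<in>set xs. inLT x) \<and> inLT b"
  by (induction xs) auto

lemma classical_foldr_FImp:
  "classical (foldr FImp xs b) \<longleftrightarrow> (\<forall>x\<in>set xs. classical x) \<and> classical b"
  by (induction xs) auto

lemma beval_foldr_FImp: "beval f (foldr FImp xs b) \<longleftrightarrow> ((\<forall>x\<in>set xs. beval f x) \<longrightarrow> beval f b)"
  by (induction xs) auto

lemma sbthm_imp_inLT: "sbthm a \<Longrightarrow> inLT a"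
  by (induction rule: sbthm.induct)
    (auto simp: taut_def inLT_conjs is_literal_imp_inLT classical_imp_inLT)

lemma sbthm_foldr_FImp_mp: "sbthm (foldr FImp xs b) \<Longrightarrow> \<forall>x\<in>set xs. sbthm x \<Longrightarrow> sbthm b"
  by (induction xs) (auto intro: sbthm.MP)

lemma sbthm_tautological_consequence:
  assumes "\<forall>x\<in>set xs. sbthm x" and "inLT b" and "\<forall>f. (\<forall>x\<in>set xs. beval f x) \<longrightarrow> beval f b"
  shows "sbthm b"
proof -
  have "taut (foldr FImp xs b)"
    using assms by (auto simp: taut_def inLT_foldr_FImp beval_foldr_FImp sbthm_imp_inLT)
  then show ?thesis
    using sbthm.Taut sbthm_foldr_FImp_mp assms(1) by blast
qed

lemma MCS_imp_inLT: "MCS D \<Longrightarrow> a \<in> D \<Longrightarrow> inLT a"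
  unfolding MCS_def by auto

lemma MCS_closed_derivation:
  assumes "MCS D" and "set xs \<subseteq> D" and "sbthm (foldr FImp xs b)" and "inLT b"
  shows "b \<in> D"
proof (rule ccontr)
  assume "b \<notin> D"
  then have "FNeg b \<in> D"
    using assms(1,4) unfolding MCS_def by auto
  have "sbthm (foldr FImp (xs @ [FNeg b]) FBot)"
    by (rule sbthm_tautological_consequence[of "[foldr FImp xs b]"])
      (use assms MCS_imp_inLT in \<open>auto simp: inLT_foldr_FImp beval_foldr_FImp\<close>)
  with assms(2) \<open>FNeg b \<in> D\<close> have "derives D FBot"
    unfolding derives_def by (intro exI[of _ "xs @ [FNeg b]"]) auto
  with assms(1) show False
    unfolding MCS_def by auto
qed

lemma MCS_closed_tautological:
  assumes "MCS D" and "set xs \<subseteq> D" and "inLT b" and "\<forall>f. (\<forall>x\<in>set xs. beval f x) \<longrightarrow> beval f b"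
  shows "b \<in> D"
proof -
  have "sbthm (foldr FImp xs b)"
    by (rule sbthm.Taut)
      (use assms MCS_imp_inLT in \<open>auto simp: taut_def inLT_foldr_FImp beval_foldr_FImp\<close>)
  with assms show ?thesis
    using MCS_closed_derivation by blast
qed

lemma MCS_theorem: "MCS D \<Longrightarrow> sbthm b \<Longrightarrow> b \<in> D"
  using MCS_closed_derivation[of D "[]" b] sbthm_imp_inLT by auto

lemma MCS_FBot: "MCS D \<Longrightarrow> FBot \<notin> D"
proof
  assume "MCS D" and "FBot \<in> D"
  have "sbthm (foldr FImp [FBot] FBot)"
    by (auto intro: sbthm.Taut simp: taut_def)
  with \<open>FBot \<in> D\<close> have "derives D FBot"
    unfolding derives_def by (intro exI[of _ "[FBot]"]) auto
  with \<open>MCS D\<close> show False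
    unfolding MCS_def by auto
qed

lemma MCS_mem_iff_determined:
  assumes "MCS D" and "set xs \<subseteq> D" and "inLT b" and "\<forall>f. (\<forall>x\<in>set xs. beval f x) \<longrightarrow> (beval f b \<longleftrightarrow> P)"
  shows "b \<in> D \<longleftrightarrow> P"
proof (cases P)
  case True
  then show ?thesis
    using MCS_closed_tautological[OF assms(1-3)] assms(4) by blast
next
  case False
  then have "FNeg b \<in> D"
    using MCS_closed_tautological[OF assms(1,2), of "FNeg b"] assms(3,4) by auto
  then show ?thesis
    using False MCS_FBot[OF assms(1)] MCS_closed_tautological[OF assms(1), of "[b, FNeg b]" FBot]
    by auto
qed

lemma MCS_beval_mem:
  assumes "MCS D" and "inLT a"
  shows "beval (\<lambda>x. x \<in> D) a \<longleftrightarrow> a \<in> D"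
  using assms(2)
proof (induction a)
  \<comment> \<open>\<open>signed x\<close> is whichever of \<open>x\<close>, \<open>\<not>x\<close> lies in \<open>D\<close>; it forces on \<open>x\<close> its value in \<open>D\<close>.\<close>
  define signed where "signed x = (if x \<in> D then x else FNeg x)" for x
  have signed: "signed x \<in> D" "beval f (signed x) \<longleftrightarrow> (beval f x \<longleftrightarrow> x \<in> D)" if "inLT x" for x f
    using that assms(1) unfolding signed_def MCS_def by auto
  { case (FNeg a)
    then show ?case
      using MCS_mem_iff_determined[OF assms(1), of "[signed a]" "FNeg a"] signed[of a] by auto }
  { case (FAnd a b)
    then show ?case
      using MCS_mem_iff_determined[OF assms(1), of "[signed a, signed b]" "FAnd a b"]
        signed[of a] signed[of b] by auto }
  { case (FOr a b)
    then show ?case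
      using MCS_mem_iff_determined[OF assms(1), of "[signed a, signed b]" "FOr a b"]
        signed[of a] signed[of b] by auto }
  { case (FImp a b)
    then show ?case
      using MCS_mem_iff_determined[OF assms(1), of "[signed a, signed b]" "FImp a b"]
        signed[of a] signed[of b] by auto }
  { case (FIff a b)
    then show ?case
      using MCS_mem_iff_determined[OF assms(1), of "[signed a, signed b]" "FIff a b"]
        signed[of a] signed[of b] by auto }
qed (simp_all add: MCS_FBot[OF assms(1)])

lemma MCS_FNeg: "MCS D \<Longrightarrow> inLT a \<Longrightarrow> FNeg a \<in> D \<longleftrightarrow> a \<notin> D"
  using MCS_beval_mem[of D a] MCS_beval_mem[of D "FNeg a"] by auto

lemma MCS_binary_connectives:
  assumes "MCS D" and "inLT a" and "inLT b"
  shows "FAnd a b \<in> D \<longleftrightarrow> a \<in> D \<and> b \<in> D"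
    and "FOr a b \<in> D \<longleftrightarrow> a \<in> D \<or> b \<in> D"
    and "FImp a b \<in> D \<longleftrightarrow> (a \<in> D \<longrightarrow> b \<in> D)"
    and "FIff a b \<in> D \<longleftrightarrow> (a \<in> D \<longleftrightarrow> b \<in> D)"
  using assms MCS_beval_mem[OF assms(1), of a] MCS_beval_mem[OF assms(1), of b]
    MCS_beval_mem[OF assms(1), of "FAnd a b"]
    MCS_beval_mem[OF assms(1), of "FOr a b"] MCS_beval_mem[OF assms(1), of "FImp a b"]
    MCS_beval_mem[OF assms(1), of "FIff a b"]
  by auto

abbreviation consistent :: "'v form set \<Rightarrow> bool" where
  "consistent X \<equiv> \<not> derives X FBot"

lemma derives_FNeg_if_inconsistent_insert:
  assumes "derives (insert a M) FBot" and "inLT a" and "M \<subseteq> {x. inLT x}"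
  shows "derives M (FNeg a)"
proof -
  obtain xs where xs: "set xs \<subseteq> insert a M" "sbthm (foldr FImp xs FBot)"
    using assms(1) unfolding derives_def by auto
  let ?ys = "filter (\<lambda>x. x \<noteq> a) xs"
  have "sbthm (foldr FImp ?ys (FNeg a))"
    by (rule sbthm_tautological_consequence[of "[foldr FImp xs FBot]"])
      (use xs assms in \<open>auto simp: inLT_foldr_FImp beval_foldr_FImp\<close>)
  moreover have "set ?ys \<subseteq> M"
    using xs by auto
  ultimately show ?thesis
    unfolding derives_def by blast
qed

lemma consistent_insert_or_insert_FNeg:
  assumes "consistent M" and "M \<subseteq> {x. inLT x}" and "inLT a"
  shows "consistent (insert a M) \<or> consistent (insert (FNeg a) M)"
proof (rule ccontr)
  assume "\<not> ?thesis"
  then have "derives M (FNeg a)" and "derives M (FNeg (FNeg a))"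
    using derives_FNeg_if_inconsistent_insert[of a M]
      derives_FNeg_if_inconsistent_insert[of "FNeg a" M] assms(2,3) by auto
  then obtain ys zs where ys: "set ys \<subseteq> M" "sbthm (foldr FImp ys (FNeg a))"
    and zs: "set zs \<subseteq> M" "sbthm (foldr FImp zs (FNeg (FNeg a)))"
    unfolding derives_def by auto
  have "sbthm (foldr FImp (ys @ zs) FBot)"
    by (rule sbthm_tautological_consequence
        [of "[foldr FImp ys (FNeg a), foldr FImp zs (FNeg (FNeg a))]"])
      (use ys zs assms in \<open>auto simp: inLT_foldr_FImp beval_foldr_FImp\<close>)
  with ys(1) zs(1) have "derives M FBot"
    unfolding derives_def by (intro exI[of _ "ys @ zs"]) auto
  with assms(1) show False ..
qed

lemma lindenbaum:
  assumes "X \<subseteq> {x. inLT x}" and "consistent X"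
  obtains M where "MCS M" and "X \<subseteq> M"
proof -
  let ?A = "{Y. X \<subseteq> Y \<and> Y \<subseteq> {x. inLT x} \<and> consistent Y}"
  have "\<exists>M\<in>?A. \<forall>Y\<in>?A. M \<subseteq> Y \<longrightarrow> Y = M"
  proof (rule subset_Zorn_nonempty)
    show "?A \<noteq> {}"
      using assms by blast
  next
    fix C assume C: "C \<noteq> {}" "subset.chain ?A C"
    have "consistent (\<Union>C)"
    proof
      assume "derives (\<Union>C) FBot"
      then obtain xs where xs: "set xs \<subseteq> \<Union>C" "sbthm (foldr FImp xs FBot)"
        unfolding derives_def by auto
      obtain B where "B \<in> C" "set xs \<subseteq> B"
        using finite_subset_Union_chain[OF _ xs(1) C] by auto
      moreover have "consistent B"
        using \<open>B \<in> C\<close> C(2) unfolding subset.chain_def by auto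
      ultimately show False
        using xs(2) unfolding derives_def by auto
    qed
    with C show "\<Union>C \<in> ?A"
      unfolding subset.chain_def by auto
  qed
  then obtain M where M: "M \<in> ?A" and maximal: "\<forall>Y\<in>?A. M \<subseteq> Y \<longrightarrow> Y = M"
    by (rule bexE)
  have "b \<in> M" if "inLT b" and "consistent (insert b M)" for b
  proof -
    have "insert b M \<in> ?A"
      using M that by auto
    then show ?thesis
      using maximal by blast
  qed
  then have "a \<in> M \<or> FNeg a \<in> M" if "inLT a" for a
    using consistent_insert_or_insert_FNeg[of M a] M that by auto
  with M have "MCS M"
    unfolding MCS_def by auto
  with M show ?thesis
    using that by blast
qed

lemma MCS_FCond_classical: "MCS \<Delta> \<Longrightarrow> FCond a b \<in> \<Delta> \<Longrightarrow> classical a \<and> classical b"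
  using MCS_imp_inLT by fastforce

definition literals_of :: "'v form set \<Rightarrow> 'v form set" where
  "literals_of \<Gamma> = {l \<in> \<Gamma>. is_literal l}"

lemma literals_of_inLT: "MCS \<Gamma> \<Longrightarrow> literals_of \<Gamma> \<subseteq> {x. inLT x}"
  unfolding literals_of_def using MCS_imp_inLT by blast

lemma same_conds_if_literals_of_subset:
  assumes "MCS \<Gamma>" and "MCS \<Omega>" and "literals_of \<Gamma> \<subseteq> \<Omega>"
  shows "same_conds \<Omega> \<Gamma>"
  unfolding same_conds_def
proof (intro allI iffI)
  fix a b
  assume "FCond a b \<in> \<Omega>"
  then have "classical a" "classical b"
    using MCS_FCond_classical assms(2) by blast+
  show "FCond a b \<in> \<Gamma>"
  proof (rule ccontr)
    assume "FCond a b \<notin> \<Gamma>"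
    then have "FNeg (FCond a b) \<in> \<Omega>"
      using MCS_FNeg[OF assms(1)] assms(3) \<open>classical a\<close> \<open>classical b\<close>
      unfolding literals_of_def is_literal_def by auto
    with \<open>FCond a b \<in> \<Omega>\<close> show False
      using MCS_FNeg[OF assms(2)] \<open>classical a\<close> \<open>classical b\<close> by auto
  qed
next
  fix a b
  assume "FCond a b \<in> \<Gamma>"
  with assms show "FCond a b \<in> \<Omega>"
    using MCS_FCond_classical unfolding literals_of_def is_literal_def by blast
qed

abbreviation nec :: "'v form \<Rightarrow> 'v form" where
  "nec t \<equiv> FCond (FNeg t) FBot"

lemma nec_if_inconsistent_with_literals_of:
  assumes "MCS \<Gamma>" and "X \<subseteq> {x. classical x}" and "derives (literals_of \<Gamma> \<union> X) FBot"
  obtains cs where "set cs \<subseteq> X" and "nec (foldr FImp cs FBot) \<in> \<Gamma>"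
proof -
  obtain xs where xs: "set xs \<subseteq> literals_of \<Gamma> \<union> X" "sbthm (foldr FImp xs FBot)"
    using assms(3) unfolding derives_def by auto
  define cs where "cs = filter (\<lambda>x. x \<in> X) xs"
  define \<chi> where "\<chi> = foldr FImp cs FBot"
  \<comment> \<open>The trivial literal \<open>\<bottom> \<leadsto> \<bottom>\<close> keeps the list of literals nonempty, as rule S5F requires.\<close>
  define ls where "ls = FCond FBot FBot # filter (\<lambda>x. x \<notin> X) xs"
  have "set cs \<subseteq> X"
    unfolding cs_def by auto
  then have "classical \<chi>"
    unfolding \<chi>_def using assms(2) by (auto simp: classical_foldr_FImp)
  have "set ls \<subseteq> \<Gamma>"
    unfolding ls_def using xs MCS_theorem[OF assms(1) sbthm.Id[of FBot]]
    by (auto simp: literals_of_def)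
  have ls_literals: "\<forall>l\<in>set ls. is_literal l"
    unfolding ls_def using xs by (auto simp: literals_of_def is_literal_def)
  then have "\<forall>l\<in>set ls. inLT l"
    using is_literal_imp_inLT by blast
  have "sbthm (FImp (conjs ls) \<chi>)"
    by (rule sbthm_tautological_consequence[of "[foldr FImp xs FBot]"])
      (use xs \<open>\<forall>l\<in>set ls. inLT l\<close> \<open>classical \<chi>\<close> classical_imp_inLT
        in \<open>auto simp: inLT_conjs beval_conjs beval_foldr_FImp \<chi>_def cs_def ls_def\<close>)
  then have "sbthm (FImp (conjs ls) (nec \<chi>))"
    using sbthm.S5F[of ls \<chi>] ls_literals \<open>classical \<chi>\<close> by (auto simp: ls_def)
  moreover have "conjs ls \<in> \<Gamma>"
    using MCS_closed_tautological[OF assms(1) \<open>set ls \<subseteq> \<Gamma>\<close>] \<open>\<forall>l\<in>set ls. inLT l\<close>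
    by (auto simp: inLT_conjs beval_conjs)
  ultimately have "nec \<chi> \<in> \<Gamma>"
    using MCS_closed_derivation[OF assms(1), of "[conjs ls]"] \<open>classical \<chi>\<close> classical_imp_inLT
    by auto
  with \<open>set cs \<subseteq> X\<close> show ?thesis
    using that unfolding \<chi>_def by blast
qed

lemma nec_mono:
  assumes "MCS \<Gamma>" and "classical c" and "classical t" and "\<forall>f. beval f c \<longrightarrow> beval f t"
    and "nec c \<in> \<Gamma>"
  shows "nec t \<in> \<Gamma>"
proof -
  have "sbthm (FImp (nec c) (FNeg (FNeg c)))"
    using sbthm.Bot[of "FNeg c"] assms(2) by auto
  then have "sbthm (FImp (conjs [nec c]) t)"
    by (intro sbthm_tautological_consequence[of "[FImp (nec c) (FNeg (FNeg c))]"])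
      (use assms classical_imp_inLT in auto)
  then have "sbthm (FImp (conjs [nec c]) (nec t))"
    using sbthm.S5F[of "[nec c]" t] assms(2,3) unfolding is_literal_def by auto
  then show ?thesis
    using MCS_closed_derivation[OF assms(1), of "[nec c]"] assms classical_imp_inLT by auto
qed

lemma nec_if_mem_same_conds:
  assumes "MCS \<Gamma>" and "classical t" and "\<And>\<Omega>. MCS \<Omega> \<Longrightarrow> same_conds \<Omega> \<Gamma> \<Longrightarrow> t \<in> \<Omega>"
  shows "nec t \<in> \<Gamma>"
proof (cases "derives (literals_of \<Gamma> \<union> {FNeg t}) FBot")
  case True
  then obtain cs where cs: "set cs \<subseteq> {FNeg t}" "nec (foldr FImp cs FBot) \<in> \<Gamma>"
    using nec_if_inconsistent_with_literals_of[OF assms(1), of "{FNeg t}"] assms(2) by auto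
  show ?thesis
    by (rule nec_mono[OF assms(1) _ assms(2) _ cs(2)])
      (use cs(1) assms(2) in \<open>auto simp: classical_foldr_FImp beval_foldr_FImp\<close>)
next
  case False
  then obtain \<Omega> where \<Omega>: "MCS \<Omega>" "literals_of \<Gamma> \<union> {FNeg t} \<subseteq> \<Omega>"
    using lindenbaum[of "literals_of \<Gamma> \<union> {FNeg t}"] literals_of_inLT[OF assms(1)] assms(2)
      classical_imp_inLT by auto
  then have "t \<in> \<Omega>"
    using assms(3) same_conds_if_literals_of_subset[OF assms(1)] by blast
  with \<Omega> show ?thesis
    using MCS_FNeg[OF \<Omega>(1)] assms(2) classical_imp_inLT by auto
qed

lemma MCS_FCond_consequence:
  assumes "MCS \<Gamma>" and "as \<noteq> []" and "\<forall>a\<in>set as. classical a \<and> FCond p a \<in> \<Gamma>"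
    and "classical p" and "classical b" and "\<forall>f. (\<forall>a\<in>set as. beval f a) \<longrightarrow> beval f b"
  shows "FCond p b \<in> \<Gamma>"
proof -
  have "sbthm (FImp (conjs as) b)"
    by (rule sbthm.Taut)
      (use assms classical_imp_inLT in \<open>auto simp: taut_def inLT_conjs beval_conjs\<close>)
  then have "sbthm (FImp (conjs (map (FCond p) as)) (FCond p b))"
    using sbthm.RCK[of as b p] assms by auto
  moreover have "conjs (map (FCond p) as) \<in> \<Gamma>"
    by (rule MCS_closed_tautological[OF assms(1), of "map (FCond p) as"])
      (use assms in \<open>auto simp: inLT_conjs beval_conjs\<close>)
  ultimately show ?thesis
    using MCS_closed_derivation[OF assms(1), of "[conjs (map (FCond p) as)]"] assms by auto
qed

lemma FCond_if_nec:
  assumes "MCS \<Gamma>" and "classical p" and "classical t" and "nec t \<in> \<Gamma>"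
  shows "FCond p t \<in> \<Gamma>"
proof -
  have "nec (FIff p (FAnd p t)) \<in> \<Gamma>"
    by (rule nec_mono[OF assms(1,3) _ _ assms(4)]) (use assms in auto)
  moreover have "sbthm (FImp (nec (FIff p (FAnd p t))) (FIff (FCond p t) (FCond (FAnd p t) t)))"
    using sbthm.Ext[of p "FAnd p t" t] assms by auto
  ultimately have "FIff (FCond p t) (FCond (FAnd p t) t) \<in> \<Gamma>"
    using MCS_closed_derivation[OF assms(1), of "[nec (FIff p (FAnd p t))]"] assms by auto
  moreover have "FCond (FAnd p t) t \<in> \<Gamma>"
    using MCS_FCond_consequence[OF assms(1), of "[FAnd p t]"]
      MCS_theorem[OF assms(1) sbthm.Id[of "FAnd p t"]] assms by auto
  ultimately show ?thesis
    using MCS_binary_connectives[OF assms(1)] assms by auto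
qed

lemma likely_MCS_if_not_FCond:
  assumes "MCS \<Gamma>" and "classical p" and "classical q" and "FCond p q \<notin> \<Gamma>"
  obtains \<Omega> where "MCS \<Omega>" and "same_conds \<Omega> \<Gamma>" and "likely_set p \<Gamma> \<subseteq> \<Omega>" and "FNeg q \<in> \<Omega>"
proof -
  let ?X = "likely_set p \<Gamma> \<union> {FNeg q}"
  have X_classical: "?X \<subseteq> {x. classical x}"
    using assms MCS_FCond_classical[OF assms(1)] unfolding likely_set_def by auto
  have "consistent (literals_of \<Gamma> \<union> ?X)"
  proof
    assume "derives (literals_of \<Gamma> \<union> ?X) FBot"
    then obtain cs where cs: "set cs \<subseteq> ?X" "nec (foldr FImp cs FBot) \<in> \<Gamma>"
      using nec_if_inconsistent_with_literals_of[OF assms(1) X_classical] by auto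
    define \<chi> where "\<chi> = foldr FImp cs FBot"
    have "classical \<chi>"
      using cs X_classical unfolding \<chi>_def by (auto simp: classical_foldr_FImp)
    then have "FCond p \<chi> \<in> \<Gamma>"
      using FCond_if_nec[OF assms(1,2)] cs \<chi>_def by auto
    then have "FCond p q \<in> \<Gamma>"
      using \<open>classical \<chi>\<close> cs X_classical assms
      by (intro MCS_FCond_consequence[OF assms(1), of "\<chi> # filter (\<lambda>x. x \<noteq> FNeg q) cs"])
        (auto simp: \<chi>_def beval_foldr_FImp likely_set_def)
    with assms(4) show False ..
  qed
  then obtain \<Omega> where "MCS \<Omega>" "literals_of \<Gamma> \<union> ?X \<subseteq> \<Omega>"
    using lindenbaum[of "literals_of \<Gamma> \<union> ?X"] literals_of_inLT[OF assms(1)] X_classical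
      classical_imp_inLT by blast
  then show ?thesis
    using that same_conds_if_literals_of_subset[OF assms(1)] by auto
qed

lemma can_S_MCS: "s \<in> can_S I \<Longrightarrow> MCS (fst s)"
  unfolding can_S_def can_cell_def by auto

lemma can_S_if_MCS:
  assumes "representatives I" and "MCS \<Omega>" and "classical \<phi>" and "i \<in> {0, 1, 2}"
  shows "(\<Omega>, \<phi>, i) \<in> can_S I"
proof -
  obtain \<Gamma> where "\<Gamma> \<in> I" and "same_conds \<Omega> \<Gamma>"
    using assms(1,2) unfolding representatives_def by (meson ex1_implies_ex)
  with assms(2-4) show ?thesis
    unfolding can_S_def can_cell_def by auto
qed

lemma the_cell_eq:
  assumes "representatives I" and "\<Gamma> \<in> I" and "s \<in> can_cell \<Gamma>"
  shows "(THE \<Gamma>. \<Gamma> \<in> I \<and> s \<in> can_cell \<Gamma>) = \<Gamma>"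
proof (rule the_equality)
  fix H
  assume H: "H \<in> I \<and> s \<in> can_cell H"
  have "MCS (fst s)" and "same_conds (fst s) \<Gamma>" and "same_conds (fst s) H"
    using assms(3) H unfolding can_cell_def by auto
  moreover have "\<exists>!\<Gamma>. \<Gamma> \<in> I \<and> same_conds (fst s) \<Gamma>"
    using assms(1) \<open>MCS (fst s)\<close> unfolding representatives_def by blast
  ultimately show "H = \<Gamma>"
    using assms(2) H by blast
qed (use assms in simp)

lemma most_state_likely:
  assumes "(\<Delta>, c, i) \<in> most (can_pref \<Gamma>) {v \<in> can_cell \<Gamma>. p \<in> fst v}" and "classical p"
    and "MCS \<Omega>" and "same_conds \<Omega> \<Gamma>" and "p \<in> \<Omega>"
  shows "likely_set c \<Gamma> \<subseteq> \<Delta>" and "c \<in> \<Omega>"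
proof -
  \<comment> \<open>\<open>j\<close> follows \<open>i\<close> in the cycle 0, 1, 2 of the tie-break, which never also prefers
    \<open>(\<Delta>, c, i)\<close> to \<open>(\<Omega>, p, j)\<close>.\<close>
  define j :: nat where "j = (if i = 0 then 1 else if i = 1 then 2 else 0)"
  have i: "i \<in> {0, 1, 2}"
    using assms(1) unfolding most_def can_cell_def by auto
  have "(\<Omega>, p, j) \<in> {v \<in> can_cell \<Gamma>. p \<in> fst v}"
    using assms(2-5) unfolding can_cell_def j_def by auto
  moreover have "can_pref \<Gamma> (\<Omega>, p, j) (\<Delta>, c, i)"
    using i unfolding can_pref_def j_def by auto
  ultimately have "can_pref \<Gamma> (\<Delta>, c, i) (\<Omega>, p, j)"
    using assms(1) unfolding most_def by blast
  then show "likely_set c \<Gamma> \<subseteq> \<Delta>" and "c \<in> \<Omega>"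
    unfolding can_pref_def j_def by (auto split: if_splits)
qed

lemma FCond_imp_most_subset:
  assumes \<Gamma>: "MCS \<Gamma>" and "classical p" and "classical q" and "FCond p q \<in> \<Gamma>"
  shows "most (can_pref \<Gamma>) {v \<in> can_cell \<Gamma>. p \<in> fst v} \<subseteq> {v \<in> can_cell \<Gamma>. q \<in> fst v}"
proof
  fix x
  assume x_most: "x \<in> most (can_pref \<Gamma>) {v \<in> can_cell \<Gamma>. p \<in> fst v}"
  obtain \<Delta> c i where x: "x = (\<Delta>, c, i)"
    by (cases x) auto
  have \<Delta>: "MCS \<Delta>" "same_conds \<Delta> \<Gamma>" "classical c" "p \<in> \<Delta>"
    using x_most x unfolding most_def can_cell_def by auto
  have inLT: "inLT p" "inLT q" "inLT c"
    using assms \<Delta> classical_imp_inLT by auto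
  have "FIff p (FAnd c p) \<in> \<Omega>" if "MCS \<Omega>" and "same_conds \<Omega> \<Gamma>" for \<Omega>
    using most_state_likely(2)[OF x_most[unfolded x] \<open>classical p\<close> that] that inLT
      MCS_binary_connectives[of \<Omega>] by auto
  then have "nec (FIff p (FAnd c p)) \<in> \<Gamma>"
    using nec_if_mem_same_conds[OF \<Gamma>] assms \<Delta> by simp
  moreover have "sbthm (FImp (nec (FIff p (FAnd c p))) (FIff (FCond p q) (FCond (FAnd c p) q)))"
    using sbthm.Ext[of p "FAnd c p" q] assms \<Delta> by simp
  ultimately have "FIff (FCond p q) (FCond (FAnd c p) q) \<in> \<Gamma>"
    using MCS_closed_derivation[OF \<Gamma>, of "[nec (FIff p (FAnd c p))]"] assms \<Delta> inLT by simp
  then have "FCond (FAnd c p) q \<in> \<Gamma>"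
    using MCS_binary_connectives[OF \<Gamma>] assms \<Delta> by simp
  moreover have "sbthm (FImp (FCond (FAnd c p) q) (FCond c (FImp p q)))"
    using sbthm.Sh[of q c p] assms \<Delta> by simp
  ultimately have "FCond c (FImp p q) \<in> \<Gamma>"
    using MCS_closed_derivation[OF \<Gamma>, of "[FCond (FAnd c p) q]"] assms \<Delta> by simp
  then have "FImp p q \<in> \<Delta>"
    using most_state_likely(1)[OF x_most[unfolded x] \<open>classical p\<close> \<Delta>(1,2,4)]
    unfolding likely_set_def by auto
  with x_most x \<Delta> inLT show "x \<in> {v \<in> can_cell \<Gamma>. q \<in> fst v}"
    using MCS_binary_connectives[OF \<open>MCS \<Delta>\<close>] unfolding most_def by auto
qed

lemma most_subset_imp_FCond:
  assumes \<Gamma>: "MCS \<Gamma>" and "classical p" and "classical q"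
    and most_q: "most (can_pref \<Gamma>) {v \<in> can_cell \<Gamma>. p \<in> fst v} \<subseteq> {v \<in> can_cell \<Gamma>. q \<in> fst v}"
  shows "FCond p q \<in> \<Gamma>"
proof (rule ccontr)
  assume "FCond p q \<notin> \<Gamma>"
  then obtain \<Omega> where \<Omega>: "MCS \<Omega>" "same_conds \<Omega> \<Gamma>" "likely_set p \<Gamma> \<subseteq> \<Omega>" "FNeg q \<in> \<Omega>"
    using likely_MCS_if_not_FCond[OF assms(1-3)] by blast
  have "p \<in> \<Omega>"
    using \<Omega>(3) MCS_theorem[OF \<Gamma> sbthm.Id[OF \<open>classical p\<close>]] unfolding likely_set_def by auto
  \<comment> \<open>\<open>(\<Omega>, p, 0)\<close> is preferred to every \<open>p\<close>-state of the cell.\<close>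
  then have "(\<Omega>, p, 0) \<in> most (can_pref \<Gamma>) {v \<in> can_cell \<Gamma>. p \<in> fst v}"
    using \<Omega> \<open>classical p\<close> unfolding most_def can_cell_def can_pref_def by auto
  then have "q \<in> \<Omega>"
    using most_q by auto
  with \<Omega> show False
    using MCS_FNeg \<open>classical q\<close> classical_imp_inLT by blast
qed

lemma sbthm_FBel_foldr_FImp:
  assumes "sbthm (foldr FImp ys a)" and "\<forall>y\<in>set ys. inLT y" and "inLT a"
  shows "sbthm (foldr FImp (map FBel ys) (FBel a))"
  using assms
proof (induction ys arbitrary: a)
  case Nil
  then show ?case
    by (simp add: sbthm.Nec)
next
  case (Cons y ys)
  have "sbthm (foldr FImp ys (FImp y a))"
    by (rule sbthm_tautological_consequence[of "[foldr FImp (y # ys) a]"])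
      (use Cons.prems in \<open>auto simp: inLT_foldr_FImp beval_foldr_FImp\<close>)
  then have "sbthm (foldr FImp (map FBel ys) (FBel (FImp y a)))"
    using Cons by simp
  moreover have "sbthm (FImp (FBel (FImp y a)) (FImp (FBel y) (FBel a)))"
    using sbthm.K[of y a] Cons.prems by simp
  ultimately show ?case
    using Cons.prems
    by (intro sbthm_tautological_consequence[of "[foldr FImp (map FBel ys) (FBel (FImp y a)),
          FImp (FBel (FImp y a)) (FImp (FBel y) (FBel a))]"])
      (auto simp: inLT_foldr_FImp beval_foldr_FImp)
qed

lemma MCS_FBel_witness:
  assumes "MCS \<Delta>" and "inLT a" and "FBel a \<notin> \<Delta>"
  obtains \<Omega> where "MCS \<Omega>" and "\<And>b. FBel b \<in> \<Delta> \<Longrightarrow> b \<in> \<Omega>" and "a \<notin> \<Omega>"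
proof -
  let ?X = "{b. FBel b \<in> \<Delta>}"
  have X_inLT: "?X \<subseteq> {x. inLT x}"
    using MCS_imp_inLT[OF assms(1)] by fastforce
  have "consistent (insert (FNeg a) ?X)"
  proof
    assume "derives (insert (FNeg a) ?X) FBot"
    then obtain ys where ys: "set ys \<subseteq> ?X" "sbthm (foldr FImp ys (FNeg (FNeg a)))"
      using derives_FNeg_if_inconsistent_insert[of "FNeg a" ?X] assms(2) X_inLT
      unfolding derives_def by auto
    have "\<forall>y\<in>set ys. inLT y"
      using ys X_inLT by auto
    have "sbthm (foldr FImp ys a)"
      by (rule sbthm_tautological_consequence[of "[foldr FImp ys (FNeg (FNeg a))]"])
        (use ys \<open>\<forall>y\<in>set ys. inLT y\<close> assms(2) in \<open>auto simp: inLT_foldr_FImp beval_foldr_FImp\<close>)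
    then have "sbthm (foldr FImp (map FBel ys) (FBel a))"
      using sbthm_FBel_foldr_FImp \<open>\<forall>y\<in>set ys. inLT y\<close> assms(2) by blast
    moreover have "set (map FBel ys) \<subseteq> \<Delta>"
      using ys(1) by auto
    ultimately have "FBel a \<in> \<Delta>"
      using MCS_closed_derivation[OF assms(1), of "map FBel ys" "FBel a"] assms(2) by simp
    with assms(3) show False ..
  qed
  then obtain \<Omega> where "MCS \<Omega>" "insert (FNeg a) ?X \<subseteq> \<Omega>"
    using lindenbaum[of "insert (FNeg a) ?X"] X_inLT assms(2) by auto
  with that show ?thesis
    using MCS_FNeg assms(2) by blast
qed

lemma can_sat_iff_mem:
  assumes rep: "representatives I" and "s \<in> can_S I" and "inLT a"
  shows "can_sat I s a \<longleftrightarrow> a \<in> fst s"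
  using assms(2,3) unfolding can_sat_def
proof (induction a arbitrary: s)
  case (FVar p)
  then show ?case
    by (simp add: can_V_def)
next
  case FBot
  then show ?case
    using MCS_FBot[OF can_S_MCS[OF FBot.prems(1)]] by simp
next
  case (FNeg a)
  then show ?case
    using MCS_FNeg[OF can_S_MCS[OF FNeg.prems(1)]] by simp
next
  case (FAnd a b)
  then show ?case
    using MCS_binary_connectives[OF can_S_MCS[OF FAnd.prems(1)]] by simp
next
  case (FOr a b)
  then show ?case
    using MCS_binary_connectives[OF can_S_MCS[OF FOr.prems(1)]] by simp
next
  case (FImp a b)
  then show ?case
    using MCS_binary_connectives[OF can_S_MCS[OF FImp.prems(1)]] by simp
next
  case (FIff a b)
  then show ?case
    using MCS_binary_connectives[OF can_S_MCS[OF FIff.prems(1)]] by simp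
next
  case (FCond a b)
  let ?sat = "sat I can_cell can_pref (can_R I) (can_V I)"
  obtain \<Gamma> where \<Gamma>: "\<Gamma> \<in> I" "s \<in> can_cell \<Gamma>"
    using FCond.prems(1) unfolding can_S_def by blast
  have "MCS \<Gamma>"
    using rep \<Gamma>(1) unfolding representatives_def by blast
  have "classical a" and "classical b"
    using FCond.prems(2) by auto
  have "{v \<in> can_cell \<Gamma>. ?sat v a} = {v \<in> can_cell \<Gamma>. a \<in> fst v}"
    and "{v \<in> can_cell \<Gamma>. ?sat v b} = {v \<in> can_cell \<Gamma>. b \<in> fst v}"
    using FCond.IH \<open>classical a\<close> \<open>classical b\<close> classical_imp_inLT \<Gamma>(1)
    unfolding can_S_def by blast+
  then have "?sat s (FCond a b) \<longleftrightarrow>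
      most (can_pref \<Gamma>) {v \<in> can_cell \<Gamma>. a \<in> fst v} \<subseteq> {v \<in> can_cell \<Gamma>. b \<in> fst v}"
    by (simp add: the_cell_eq[OF rep \<Gamma>])
  also have "\<dots> \<longleftrightarrow> FCond a b \<in> \<Gamma>"
    using FCond_imp_most_subset most_subset_imp_FCond \<open>MCS \<Gamma>\<close> \<open>classical a\<close> \<open>classical b\<close>
    by blast
  also have "\<dots> \<longleftrightarrow> FCond a b \<in> fst s"
    using \<Gamma>(2) unfolding can_cell_def same_conds_def by auto
  finally show ?case .
next
  case (FBel a)
  have "inLT a" and "MCS (fst s)"
    using FBel.prems can_S_MCS[OF FBel.prems(1)] by auto
  show ?case
  proof
    assume "FBel a \<in> fst s"
    then show "sat I can_cell can_pref (can_R I) (can_V I) s (FBel a)"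
      using FBel.IH \<open>inLT a\<close> unfolding can_R_def by auto
  next
    assume sat: "sat I can_cell can_pref (can_R I) (can_V I) s (FBel a)"
    show "FBel a \<in> fst s"
    proof (rule ccontr)
      assume "FBel a \<notin> fst s"
      then obtain \<Omega> where \<Omega>: "MCS \<Omega>" "\<And>b. FBel b \<in> fst s \<Longrightarrow> b \<in> \<Omega>" "a \<notin> \<Omega>"
        using MCS_FBel_witness \<open>MCS (fst s)\<close> \<open>inLT a\<close> by blast
      have "(\<Omega>, FBot, 0) \<in> can_S I"
        using can_S_if_MCS[OF rep \<Omega>(1)] by simp
      with FBel.prems(1) \<Omega>(2) have "can_R I s (\<Omega>, FBot, 0)"
        unfolding can_R_def by auto
      then have "a \<in> \<Omega>"
        using sat FBel.IH[OF \<open>(\<Omega>, FBot, 0) \<in> can_S I\<close> \<open>inLT a\<close>] by simp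
      with \<Omega>(3) show False ..
    qed
  qed
qed

theorem lemma3:
  fixes I :: "'v form set set" and \<Delta> :: "'v form set" and \<pi> :: "'v form" and i :: nat
    and \<alpha> :: "'v form"
  assumes "representatives I"
    and "(\<Delta>, \<pi>, i) \<in> can_S I"
    and "inLT \<alpha>"
  shows "can_sat I (\<Delta>, \<pi>, i) \<alpha> \<longleftrightarrow> \<alpha> \<in> \<Delta>"
  using can_sat_iff_mem[OF assms] by simp

end
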